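(* Let $t\ge2$ be an integer and let $p\in\mathcal{P}_1\cup\mathcal{P}_2\cup\mathcal{P}_3\cup\mathcal{P}_4$. Then for every integer $m$ with $\chi_t(mp)\ne0$, $$\chi_t(mp)=\begin{cases}\chi_t(m),& p\in\mathcal{P}_1\cup\mathcal{P}_2,\\ -\chi_t(m),& p\in\mathcal{P}_3\cup\mathcal{P}_4.\end{cases}$$
   Context: $\chi_t$ is the function of period $3\cdot2^{t+1}$ with $\chi_t(n)=1$ if $n\equiv 2^{t+1}-3$ or $3+2^{t+2}$, $\chi_t(n)=-1$ if $n\equiv 2^{t+1}+3$ or $2^{t+2}-3\pmod{3\cdot2^{t+1}}$, and $0$ otherwise. $\mathcal{P}_1$ is the set of primes $p\equiv1\pmod{3\cdot2^{t+1}}$; $\mathcal{P}_2$ the set of primes $p\equiv3\cdot2^{t+1}-1\pmod{3\cdot2^{t+1}}$; $\mathcal{P}_3$ the set of primes $p\equiv r_1(t)\pmod{3\cdot2^{t+1}}$ where $r_1(t)=2^{t+1}-1$ if $t$ is even and $2^{t+1}+1$ if $t$ is odd; $\mathcal{P}_4$ the set of primes $p\equiv r_2(t)\pmod{3\cdot2^{t+1}}$ where $r_2(t)=2^{t+2}+1$ if $t$ is even and $2^{t+2}-1$ if $t$ is odd. *)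

theory Defs
  imports Main "HOL-Computational_Algebra.Primes"
begin

definition modulus :: "nat \<Rightarrow> int" where
  "modulus t = 3 * 2 ^ (t + 1)"

definition chi :: "nat \<Rightarrow> int \<Rightarrow> int" where
  "chi t n =
     (let M = modulus t; r = n mod M in
      if r = (2 ^ (t+1) - 3) mod M \<or> r = (3 + 2 ^ (t+2)) mod M then 1
      else if r = (2 ^ (t+1) + 3) mod M \<or> r = (2 ^ (t+2) - 3) mod M then -1
      else 0)"

definition r1 :: "nat \<Rightarrow> int" where
  "r1 t = (if even t then 2 ^ (t+1) - 1 else 2 ^ (t+1) + 1)"

definition r2 :: "nat \<Rightarrow> int" where
  "r2 t = (if even t then 2 ^ (t+2) + 1 else 2 ^ (t+2) - 1)"

definition P1 :: "nat \<Rightarrow> int set" where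
  "P1 t = {p. prime p \<and> 0 < p \<and> p mod modulus t = (1) mod modulus t}"

definition P2 :: "nat \<Rightarrow> int set" where
  "P2 t = {p. prime p \<and> 0 < p \<and> p mod modulus t = (modulus t - 1) mod modulus t}"

definition P3 :: "nat \<Rightarrow> int set" where
  "P3 t = {p. prime p \<and> 0 < p \<and> p mod modulus t = (r1 t) mod modulus t}"

definition P4 :: "nat \<Rightarrow> int set" where
  "P4 t = {p. prime p \<and> 0 < p \<and> p mod modulus t = (r2 t) mod modulus t}"

end

theory Submission
  imports Defs
begin

text \<open>Write \<open>N = 2^(t+1)\<close>, so that the modulus is \<open>3 N\<close> with \<open>N\<close> prime to 3. By the Chinese
remainder theorem, \<open>\<chi>\<^sub>t\<close> is the product of a function modulo \<open>N\<close> (value \<open>1\<close> at \<open>-3\<close>, \<open>-1\<close> at \<open>3\<close>)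
and a function modulo 3 (value \<open>1\<close> at \<open>N\<close>, \<open>-1\<close> at \<open>-N\<close>); both factors are odd. Every prime
of \<open>P\<^sub>1,\<dots>,P\<^sub>4\<close> is \<open>\<plusminus>1\<close> modulo \<open>N\<close> and \<open>\<plusminus>1\<close> modulo 3, with equal signs for \<open>P\<^sub>1, P\<^sub>2\<close> and
opposite signs for \<open>P\<^sub>3, P\<^sub>4\<close>, so multiplying by \<open>p\<close> multiplies \<open>\<chi>\<^sub>t\<close> by the product of these signs.\<close>

lemma mod_mult_eq_iff_coprime:
  fixes x y m n :: int
  assumes "coprime m n"
  shows "x mod (m * n) = y mod (m * n) \<longleftrightarrow> x mod m = y mod m \<and> x mod n = y mod n"
  using assms by (auto simp add: mod_eq_dvd_iff intro: divides_mult dest: dvd_mult_left dvd_mult_right)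

lemma pow2_mod3: "(2::int) ^ k mod 3 = (-1) ^ k mod 3"
proof -
  have "(2::int) mod 3 = (-1) mod 3" by simp
  then show ?thesis by (metis power_mod)
qed

lemma pow2_mod3_ne_uminus: "(2::int) ^ k mod 3 \<noteq> (- (2 ^ k)) mod 3"
proof -
  have "(2::int) ^ k mod 3 = 1 \<or> (2::int) ^ k mod 3 = 2"
    using pow2_mod3[of k] by (cases "even k") auto
  then show ?thesis
    by presburger
qed

lemma pow2_gt_6:
  assumes "t \<ge> 2"
  shows "(6::int) < 2 ^ (t + 1)"
proof -
  have "(2::int) ^ 3 \<le> 2 ^ (t + 1)"
    using assms by (intro power_increasing) auto
  then show ?thesis
    by simp
qed

lemma minus3_mod_ne_3: "(6::int) < q \<Longrightarrow> (-3) mod q \<noteq> 3 mod q"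
  by (simp add: zmod_zminus1_eq_if)

lemma modulus_mod_eq_iff:
  "x mod modulus t = y mod modulus t \<longleftrightarrow> x mod 2 ^ (t + 1) = y mod 2 ^ (t + 1) \<and> x mod 3 = y mod 3"
proof -
  have "coprime 3 ((2::int) ^ (t + 1))"
    by simp
  then show ?thesis
    unfolding modulus_def using mod_mult_eq_iff_coprime by blast
qed

definition sign_mod :: "int \<Rightarrow> int \<Rightarrow> int \<Rightarrow> int" where
  "sign_mod q a x = (if x mod q = a mod q then 1 else if x mod q = (- a) mod q then -1 else 0)"

lemma sign_mod_cong: "x mod q = y mod q \<Longrightarrow> sign_mod q a x = sign_mod q a y"
  by (simp add: sign_mod_def)

lemma sign_mod_uminus:
  assumes "a mod q \<noteq> (- a) mod q"
  shows "sign_mod q a (- x) = - sign_mod q a x"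
proof -
  have "(- x) mod q = b mod q \<longleftrightarrow> x mod q = (- b) mod q" for b
    by (metis equation_minus_iff mod_minus_eq)
  then show ?thesis
    using assms by (auto simp add: sign_mod_def)
qed

lemma sign_mod_mult_unit:
  assumes "a mod q \<noteq> (- a) mod q" and "p mod q = s mod q" and "s = 1 \<or> s = -1"
  shows "sign_mod q a (m * p) = s * sign_mod q a m"
proof -
  have "(m * p) mod q = (m * s) mod q"
    using assms(2) by (metis mod_mult_right_eq)
  then have "sign_mod q a (m * p) = sign_mod q a (m * s)"
    by (rule sign_mod_cong)
  then show ?thesis
    using assms(3) sign_mod_uminus[OF assms(1)] by auto
qed

lemma chi_eq_sign_mod_mult:
  assumes "t \<ge> 2"
  defines "N \<equiv> (2::int) ^ (t + 1)"
  shows "chi t x = sign_mod N (-3) x * sign_mod 3 N x"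
proof -
  have M: "modulus t = 3 * N"
    by (simp add: modulus_def N_def)
  have mod_M: "x mod (3 * N) = y mod (3 * N) \<longleftrightarrow> x mod N = y mod N \<and> x mod 3 = y mod 3" for x y
    using modulus_mod_eq_iff[of x t y] by (simp add: M N_def)
  have residues: "2 ^ (t + 1) - 3 = N - 3" "3 + 2 ^ (t + 2) = 2 * N + 3"
    "2 ^ (t + 1) + 3 = N + 3" "2 ^ (t + 2) - 3 = 2 * N - 3"
    by (simp_all add: N_def)
  have modN: "(N - 3) mod N = (-3) mod N" "(2 * N + 3) mod N = 3 mod N"
    "(N + 3) mod N = 3 mod N" "(2 * N - 3) mod N = (-3) mod N"
    using mod_mult_self1[of "-3" 2 N] mod_mult_self1[of 3 2 N] by simp_all
  have mod3: "(N - 3) mod 3 = N mod 3" "(2 * N + 3) mod 3 = (- N) mod 3"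
    "(N + 3) mod 3 = N mod 3" "(2 * N - 3) mod 3 = (- N) mod 3"
    by presburger+
  show ?thesis
    unfolding chi_def Let_def M residues mod_mod_trivial mod_M modN mod3
    using pow2_mod3_ne_uminus[of "t + 1"] minus3_mod_ne_3[OF pow2_gt_6[OF assms(1)]]
    by (auto simp add: sign_mod_def N_def)
qed

lemma chi_mult_residue_signs:
  assumes "t \<ge> 2" and "s = 1 \<or> s = -1" and "s' = 1 \<or> s' = -1"
    and "p mod 2 ^ (t + 1) = s mod 2 ^ (t + 1)" and "p mod 3 = s' mod 3"
  shows "chi t (m * p) = s * s' * chi t m"
proof -
  have "sign_mod (2 ^ (t + 1)) (-3) (m * p) = s * sign_mod (2 ^ (t + 1)) (-3) m"
    using minus3_mod_ne_3[OF pow2_gt_6[OF assms(1)]] assms(2,4) by (intro sign_mod_mult_unit) auto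
  moreover have "sign_mod 3 (2 ^ (t + 1)) (m * p) = s' * sign_mod 3 (2 ^ (t + 1)) m"
    using pow2_mod3_ne_uminus assms(5,3) by (rule sign_mod_mult_unit)
  ultimately show ?thesis
    unfolding chi_eq_sign_mod_mult[OF assms(1)] by simp
qed

lemma P1_P2_residues:
  assumes "p \<in> P1 t \<union> P2 t"
  obtains s where "s = 1 \<or> s = -1" "p mod 2 ^ (t + 1) = s mod 2 ^ (t + 1)" "p mod 3 = s mod 3"
proof -
  have "p mod modulus t = 1 mod modulus t \<or> p mod modulus t = (-1) mod modulus t"
    using assms unfolding P1_def P2_def by auto
  then show ?thesis
    using that unfolding modulus_mod_eq_iff by blast
qed

lemma P3_P4_residues:
  assumes "p \<in> P3 t \<union> P4 t"
  obtains s where "s = 1 \<or> s = -1" "p mod 2 ^ (t + 1) = s mod 2 ^ (t + 1)" "p mod 3 = (- s) mod 3"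
proof -
  define N where "N = (2::int) ^ (t + 1)"
  define e where "e = (-1::int) ^ t"
  have e: "e = 1 \<or> e = -1"
    unfolding e_def by (cases "even t") auto
  have "N mod 3 = (- e) mod 3"
    using pow2_mod3[of "t + 1"] by (simp add: N_def e_def)
  then have mod3: "(N - e) mod 3 = e mod 3" "(2 * N + e) mod 3 = (- e) mod 3"
    using e by - (elim disjE; simp; presburger)+
  have modN: "(N - e) mod N = (- e) mod N" "(2 * N + e) mod N = e mod N"
    using mod_mult_self1[of e 2 N] by simp_all
  have "r1 t = N - e" "r2 t = 2 * N + e"
    by (simp_all add: r1_def r2_def N_def e_def)
  then have "p mod N = (- e) mod N \<and> p mod 3 = e mod 3 \<or> p mod N = e mod N \<and> p mod 3 = (- e) mod 3"
    using assms mod3 modN unfolding P3_def P4_def modulus_mod_eq_iff N_def by auto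
  then show ?thesis
    using that e unfolding N_def by (metis minus_minus)
qed

theorem lemma4p6:
  fixes t :: nat and p m :: int
  assumes "t \<ge> 2"
    and "p \<in> P1 t \<union> P2 t \<union> P3 t \<union> P4 t"
    and "chi t (m * p) \<noteq> 0"
  shows "chi t (m * p) = (if p \<in> P1 t \<union> P2 t then chi t m else - chi t m)"
proof (cases "p \<in> P1 t \<union> P2 t")
  case True
  then obtain s where "s = 1 \<or> s = -1" "p mod 2 ^ (t + 1) = s mod 2 ^ (t + 1)" "p mod 3 = s mod 3"
    by (rule P1_P2_residues)
  then have "chi t (m * p) = s * s * chi t m"
    using assms(1) by (intro chi_mult_residue_signs) auto
  with True \<open>s = 1 \<or> s = -1\<close> show ?thesis
    by auto
next
  case False
  with assms(2) have "p \<in> P3 t \<union> P4 t"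
    by blast
  then obtain s where "s = 1 \<or> s = -1" "p mod 2 ^ (t + 1) = s mod 2 ^ (t + 1)" "p mod 3 = (- s) mod 3"
    by (rule P3_P4_residues)
  then have "chi t (m * p) = s * (- s) * chi t m"
    using assms(1) by (intro chi_mult_residue_signs) auto
  with False \<open>s = 1 \<or> s = -1\<close> show ?thesis
    by auto
qed

end
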